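(* Let $k,n\ge1$, let $I$ be a composition of $k+n$, and let $I'$ be the composition of $n$ with $\mathrm{Des}(I')=\{a\ge1: k+a\in\mathrm{Des}(I)\}$. Let $v=1^{i'_1}2^{i'_2}\cdots$ be the nondecreasing word of evaluation $I'=(i'_1,i'_2,\dots)$. Let $r=\ell(I)$, let $K$ be the composition of $k$ with $\mathrm{Des}(K)=\mathrm{Des}(I)\cap[1,k-1]$ and $s=\ell(K)$. Then the coefficient of $\Psi_I$ in $\zeta(\tilde S_k\star_q\mathbf M_v)$ is the Gaussian binomial coefficient $\begin{bmatrix}k+r-s\\ r-s\end{bmatrix}_q$.
   Context: Compositions: positive integers with given sum; $\ell(I)$ number of parts; $\mathrm{Des}(I)$ the set of partial sums other than the total. Over $\mathbb K(q)$ ($\mathrm{char}\,\mathbb K=0$): packed words are words with letter set $\{1,\dots,m\}$; $\mathrm{pack}$ replaces the $t$-th smallest letter by $t$. For a packed word $w$ of length $N$: $\mathrm{WC}(w)$ is the composition of $N$ whose descent set is the set of positions $p<N$ with $w_p$ not occurring in $w_{p+1}\cdots w_N$; $\mathrm{sinv}(w)=\#\{i<j:w_i>w_j,\ w_j\text{ not occurring in }w_{j+1}\cdots w_N\}$. $\mathbf{WQSym}$ has basis $\mathbf M_u$ with $\mathbf M_{u'}\mathbf M_{u''}=\sum\mathbf M_u$ over packed $u=x\cdot y$ with $\mathrm{pack}(x)=u'$, $\mathrm{pack}(y)=u''$; $\mathbf M_{u'}\star_q\mathbf M_{u''}=\sum q^{\mathrm{sinv}(u)-\mathrm{sinv}(u')-\mathrm{sinv}(u'')}\mathbf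 M_u$ over the same $u$. $\mathbf{Sym}$ is the quotient by the span of $\mathbf M_u-\mathbf M_{u'}$ with $\mathrm{WC}(u)=\mathrm{WC}(u')$, $\zeta$ the quotient map, $\Psi_I=\zeta(\mathbf M_u)$ for $\mathrm{WC}(u)=I$ (a basis). $\tilde S_k=\sum\mathbf M_u$ over nondecreasing packed words $u$ of length $k$. *)

theory Defs
  imports "HOL-Computational_Algebra.Polynomial" "HOL-Computational_Algebra.Fraction_Field"
begin

definition is_comp :: "nat list \<Rightarrow> bool" where
  "is_comp I \<longleftrightarrow> (\<forall>x\<in>set I. 0 < x)"

definition Des :: "nat list \<Rightarrow> nat set" where
  "Des I = {sum_list (take j I) | j. 0 < j \<and> j < length I}"

(* the composition of N (N >= 1) whose descent set is D \<inter> [1, N-1] *)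
definition comp_of :: "nat \<Rightarrow> nat set \<Rightarrow> nat list" where
  "comp_of N D = (let ps = sorted_list_of_set ({p\<in>D. 0 < p \<and> p < N} \<union> {N})
                  in map (\<lambda>(a,b). b - a) (zip (0 # ps) ps))"

definition packed :: "nat list \<Rightarrow> bool" where
  "packed w \<longleftrightarrow> set w = {1..card (set w)}"

definition pack :: "nat list \<Rightarrow> nat list" where
  "pack w = map (\<lambda>x. card {y\<in>set w. y \<le> x}) w"

(* positions p < N (1-based) such that w_p does not occur in w_{p+1} ... w_N *)
definition wdes :: "nat list \<Rightarrow> nat set" where
  "wdes w = {p. 1 \<le> p \<and> p < length w \<and> w ! (p - 1) \<notin> set (drop p w)}"

definition WC :: "nat list \<Rightarrow> nat list" where
  "WC w = comp_of (length w) (wdes w)"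

(* 0-based indices *)
definition sinv :: "nat list \<Rightarrow> nat" where
  "sinv w = card {(i, j). i < j \<and> j < length w \<and> w ! i > w ! j
                      \<and> w ! j \<notin> set (drop (Suc j) w)}"

definition nondec_word :: "nat list \<Rightarrow> nat list" where
  "nondec_word J = concat (map (\<lambda>j. replicate (J ! j) (Suc j)) [0..<length J])"

definition qX :: "'a::field_char_0 poly fract" where
  "qX = Fract [:0, 1:] 1"

(* elements of WQSym over K(q): coefficient functions in the basis M_u (u packed) *)
type_synonym 'a wqsym = "nat list \<Rightarrow> 'a poly fract"

definition M :: "nat list \<Rightarrow> 'a::field_char_0 wqsym" where
  "M v = (\<lambda>u. if u = v then 1 else 0)"

definition S_tilde :: "nat \<Rightarrow> 'a::field_char_0 wqsym" where
  "S_tilde k = (\<lambda>u. if packed u \<and> length u = k \<and> sorted u then 1 else 0)"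

(* the q-deformed product, extended bilinearly:
   M_{u'} *q M_{u''} = sum over packed u = x.y, pack x = u', pack y = u''
   of q^(sinv u - sinv u' - sinv u'') M_u *)
definition qstar :: "'a::field_char_0 wqsym \<Rightarrow> 'a wqsym \<Rightarrow> 'a wqsym" where
  "qstar f g = (\<lambda>u. if packed u then
      (\<Sum>i\<in>{0..length u}. f (pack (take i u)) * g (pack (drop i u)) *
          qX powi (int (sinv u) - int (sinv (pack (take i u))) - int (sinv (pack (drop i u)))))
     else 0)"

(* coefficient of Psi_I in zeta(f): since zeta(M_u) = Psi_{WC(u)} and the Psi_I form a basis *)
definition psi_coeff :: "nat list \<Rightarrow> 'a::field_char_0 wqsym \<Rightarrow> 'a poly fract" where
  "psi_coeff I f = (\<Sum>u\<in>{u. packed u \<and> length u = sum_list I \<and> WC u = I}. f u)"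

definition qint :: "nat \<Rightarrow> 'a::field_char_0 poly fract" where
  "qint m = (\<Sum>i<m. qX ^ i)"

definition qfact :: "nat \<Rightarrow> 'a::field_char_0 poly fract" where
  "qfact m = (\<Prod>i\<in>{1..m}. qint i)"

definition qbinom :: "nat \<Rightarrow> nat \<Rightarrow> 'a::field_char_0 poly fract" where
  "qbinom N m = (if m \<le> N then qfact N / (qfact m * qfact (N - m)) else 0)"

end

theory Submission
  imports Defs "HOL-Library.Product_Lexorder"
begin

text \<open>
  As \<open>S~_k\<close> and \<open>M_v\<close> are sums over nondecreasing words, the coefficient of \<open>Psi_I\<close> is the sum
  of \<open>q^sinv(u)\<close> over the packed words \<open>u = x y\<close> with \<open>WC(u) = I\<close>, \<open>x\<close> nondecreasing of
  length \<open>k\<close> and \<open>pack(y) = v\<close>. Let \<open>Y\<close> be the set of letters of \<open>y\<close> and \<open>h_i\<close> the number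
  of letters of \<open>Y\<close> below \<open>x_i\<close>. The pairs counted by \<open>sinv(u)\<close> join a letter of \<open>x\<close> to the
  last occurrence of a smaller letter of \<open>y\<close>, so \<open>sinv(u) = h_1 + ... + h_k\<close>. The list \<open>h\<close> is
  nondecreasing with entries below \<open>c = l(I') + [k \<in> Des I]\<close>, and it determines \<open>u\<close>: the
  letters of \<open>x\<close> missing from \<open>Y\<close> are separated by the descents of \<open>I\<close> inside \<open>x\<close>.
  Conversely every such list arises, so the coefficient is the generating function
  \<open>[k + c - 1, c - 1]_q\<close> of nondecreasing lists of length \<open>k\<close> with entries below \<open>c\<close>,
  and \<open>c - 1 = r - s\<close>.
\<close>

section \<open>Gaussian binomial coefficients and bounded nondecreasing lists\<close>

lemma qint_add: "qint (a + b) = (qint a + qX ^ a * qint b :: 'a::field_char_0 poly fract)"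
  by (induction b) (simp_all add: qint_def algebra_simps power_add)

lemma Fract_power: "Fract p 1 ^ i = Fract (p ^ i) (1::'a::idom)"
  by (induction i) (simp_all add: One_fract_def mult_fract)

lemma qint_nonzero:
  assumes "m \<ge> 1" shows "qint m \<noteq> (0::'a::field_char_0 poly fract)"
proof -
  have "qint m = Fract (\<Sum>i<m. [:0,1:] ^ i) (1::'a poly)"
    unfolding qint_def qX_def
    by (induction m) (simp_all add: Fract_power Zero_fract_def add_fract)
  moreover have "poly (\<Sum>i<m. [:0,1:] ^ i) 1 = (of_nat m :: 'a)"
    by (induction m) (simp_all add: poly_sum)
  ultimately show ?thesis
    using assms by (auto simp: eq_fract Zero_fract_def)
qed

lemma qfact_0 [simp]: "qfact 0 = 1"
  by (simp add: qfact_def)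

lemma qfact_Suc: "qfact (Suc m) = qfact m * qint (Suc m)"
  unfolding qfact_def by (simp add: atLeastAtMostSuc_conv mult.commute)

lemma qfact_nonzero: "qfact m \<noteq> (0::'a::field_char_0 poly fract)"
  by (induction m) (simp_all add: qfact_Suc qint_nonzero)

lemma qbinom_0_right [simp]: "qbinom m 0 = (1::'a::field_char_0 poly fract)"
  by (simp add: qbinom_def qfact_nonzero)

lemma qbinom_self [simp]: "qbinom m m = (1::'a::field_char_0 poly fract)"
  by (simp add: qbinom_def qfact_nonzero)

lemma qbinom_Suc_Suc:
  "qbinom (Suc j + Suc k) (Suc j) =
     qbinom (j + Suc k) (Suc j) + qX ^ Suc k * (qbinom (j + Suc k) j :: 'a::field_char_0 poly fract)"
proof -
  define A B C :: "'a poly fract" where "A = qfact j" and "B = qfact k" and "C = qfact (j + Suc k)"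
  define a b :: "'a poly fract" where "a = qint (Suc j)" and "b = qint (Suc k)"
  have nz: "A \<noteq> 0" "B \<noteq> 0" "C \<noteq> 0" "a \<noteq> 0" "b \<noteq> 0"
    unfolding A_def B_def C_def a_def b_def by (simp_all add: qfact_nonzero qint_nonzero)
  have "qfact (Suc j + Suc k) = C * qint (Suc j + Suc k)"
    unfolding C_def by (metis add_Suc qfact_Suc)
  also have "qint (Suc j + Suc k) = b + qX ^ Suc k * a"
    unfolding a_def b_def by (metis qint_add add.commute)
  finally have l: "qbinom (Suc j + Suc k) (Suc j) = C * (b + qX ^ Suc k * a) / (A * a * (B * b))"
    unfolding qbinom_def A_def B_def a_def b_def by (simp add: qfact_Suc)
  have r1: "qbinom (j + Suc k) (Suc j) = C / (A * a * B)"
    unfolding qbinom_def A_def B_def C_def a_def by (simp add: qfact_Suc)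
  have r2: "qbinom (j + Suc k) j = C / (A * (B * b))"
    unfolding qbinom_def A_def B_def C_def b_def by (simp add: qfact_Suc)
  have "C * (b + x * a) / (A * a * (B * b)) = C / (A * a * B) + x * (C / (A * (B * b)))" for x
    using nz by (simp add: field_simps)
  from this[of "qX ^ Suc k"] show ?thesis
    by (simp only: l r1 r2)
qed

definition sorted_lists_below :: "nat \<Rightarrow> nat \<Rightarrow> nat list set" where
  "sorted_lists_below k c = {h. length h = k \<and> sorted h \<and> (\<forall>a\<in>set h. a < c)}"

lemma finite_sorted_lists_below: "finite (sorted_lists_below k c)"
proof (rule finite_subset)
  show "sorted_lists_below k c \<subseteq> {h. set h \<subseteq> {..<c} \<and> length h = k}"
    unfolding sorted_lists_below_def by auto
qed (simp add: finite_lists_length_eq)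

lemma nth_less_sorted_lists_below: "h \<in> sorted_lists_below k c \<Longrightarrow> i < k \<Longrightarrow> h ! i < c"
  unfolding sorted_lists_below_def by (auto dest: nth_mem)

lemma sorted_lists_below_0: "sorted_lists_below 0 c = {[]}"
  unfolding sorted_lists_below_def by auto

lemma sorted_lists_below_1: "sorted_lists_below k (Suc 0) = {replicate k 0}"
  unfolding sorted_lists_below_def by (auto simp: replicate_eqI)

lemma sorted_lists_below_Suc_Suc:
  "sorted_lists_below (Suc k) (Suc c) =
     Cons 0 ` sorted_lists_below k (Suc c) \<union> map Suc ` sorted_lists_below (Suc k) c"
proof (intro equalityI subsetI)
  fix h assume h: "h \<in> sorted_lists_below (Suc k) (Suc c)"
  show "h \<in> Cons 0 ` sorted_lists_below k (Suc c) \<union> map Suc ` sorted_lists_below (Suc k) c"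
  proof (cases "0 \<in> set h")
    case True
    then have "hd h = 0"
      using h unfolding sorted_lists_below_def by (cases h) auto
    with h show ?thesis
      unfolding sorted_lists_below_def by (cases h) auto
  next
    case False
    then have "h = map Suc (map (\<lambda>b. b - 1) h)"
      by (induction h) auto
    moreover have "a - 1 < c" if "a \<in> set h" for a
      using that h False unfolding sorted_lists_below_def by (cases a) auto
    then have "map (\<lambda>b. b - 1) h \<in> sorted_lists_below (Suc k) c"
      using h unfolding sorted_lists_below_def
      by (auto simp: sorted_iff_nth_mono intro!: diff_le_mono)
    ultimately show ?thesis by blast
  qed
qed (auto simp: sorted_lists_below_def sorted_map)

lemma sum_list_map_Suc: "sum_list (map Suc h) = length h + sum_list h"
  by (induction h) auto

theorem sum_sorted_lists_below:
  "(\<Sum>h\<in>sorted_lists_below k (Suc c). qX ^ sum_list h) = (qbinom (k + c) c :: 'a::field_char_0 poly fract)"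
proof (induction c arbitrary: k)
  case 0
  then show ?case by (simp add: sorted_lists_below_1 sum_list_replicate)
next
  case (Suc c)
  note IH_c = Suc.IH
  show ?case
  proof (induction k)
    case 0
    then show ?case by (simp add: sorted_lists_below_0)
  next
    case (Suc k)
    let ?w = "\<lambda>h. (qX :: 'a poly fract) ^ sum_list h"
    have "(\<Sum>h\<in>sorted_lists_below (Suc k) (Suc (Suc c)). ?w h) =
        (\<Sum>h\<in>Cons 0 ` sorted_lists_below k (Suc (Suc c)). ?w h)
      + (\<Sum>h\<in>map Suc ` sorted_lists_below (Suc k) (Suc c). ?w h)"
      unfolding sorted_lists_below_Suc_Suc
      by (rule sum.union_disjoint) (auto simp: finite_sorted_lists_below)
    also have "\<dots> = (\<Sum>h\<in>sorted_lists_below k (Suc (Suc c)). ?w h)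
      + (\<Sum>h\<in>sorted_lists_below (Suc k) (Suc c). qX ^ Suc k * ?w h)"
      by (subst (1 2) sum.reindex)
        (auto simp: inj_on_def sum_list_map_Suc power_add sorted_lists_below_def intro!: sum.cong)
    also have "\<dots> = qbinom (c + Suc k) (Suc c) + qX ^ Suc k * qbinom (c + Suc k) c"
      using IH_c[of "Suc k"] Suc.IH
      by (simp only: sum_distrib_left[symmetric] add.commute[of k] add_Suc_shift)
    also have "\<dots> = qbinom (Suc k + Suc c) (Suc c)"
      by (simp only: qbinom_Suc_Suc add.commute[of "Suc k"])
    finally show ?case .
  qed
qed

section \<open>Compositions and descent sets\<close>

definition consecutive_diffs :: "nat list \<Rightarrow> nat list" where
  "consecutive_diffs ps = map (\<lambda>(a, b). b - a) (zip (0 # ps) ps)"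

definition partial_sums :: "nat list \<Rightarrow> nat list" where
  "partial_sums I = map (\<lambda>j. sum_list (take (Suc j) I)) [0..<length I]"

lemma length_consecutive_diffs [simp]: "length (consecutive_diffs ps) = length ps"
  by (simp add: consecutive_diffs_def)

lemma nth_consecutive_diffs: "i < length ps \<Longrightarrow> consecutive_diffs ps ! i = ps ! i - (0 # ps) ! i"
  by (simp add: consecutive_diffs_def)

lemma sum_list_take_consecutive_diffs:
  assumes "sorted ps" and "j \<le> length ps"
  shows "sum_list (take j (consecutive_diffs ps)) = (0 # ps) ! j"
  using assms(2)
proof (induction j)
  case (Suc j)
  have "(0 # ps) ! j \<le> ps ! j"
    using Suc.prems assms(1) by (cases j) (auto simp: sorted_iff_nth_mono)
  with Suc show ?case
    by (simp add: take_Suc_conv_app_nth nth_consecutive_diffs)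
qed simp

lemma is_comp_consecutive_diffs:
  assumes "sorted_wrt (<) ps" and "0 \<notin> set ps"
  shows "is_comp (consecutive_diffs ps)"
  unfolding is_comp_def
proof
  fix x assume "x \<in> set (consecutive_diffs ps)"
  then obtain i where "i < length ps" "x = ps ! i - (0 # ps) ! i"
    by (auto simp: in_set_conv_nth nth_consecutive_diffs)
  moreover from this(1) have "0 < ps ! i"
    using assms(2) by (metis gr0I nth_mem)
  ultimately show "0 < x"
    using assms(1) by (cases i) (auto simp: sorted_wrt_iff_nth_less)
qed

lemma Des_consecutive_diffs:
  assumes "sorted ps"
  shows "Des (consecutive_diffs ps) = set (butlast ps)"
proof -
  have take_Suc: "sum_list (take (Suc j) (consecutive_diffs ps)) = ps ! j" if "j < length ps" for j
    using sum_list_take_consecutive_diffs[OF assms, of "Suc j"] that by simp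
  have "Des (consecutive_diffs ps) = (\<lambda>j. ps ! j) ` {..<length ps - 1}"
  proof (intro equalityI subsetI)
    fix x assume "x \<in> Des (consecutive_diffs ps)"
    then obtain j where "0 < j" "j < length ps" "x = sum_list (take j (consecutive_diffs ps))"
      unfolding Des_def by auto
    then show "x \<in> (\<lambda>j. ps ! j) ` {..<length ps - 1}"
      using take_Suc[of "j - 1"] by (intro image_eqI[of _ _ "j - 1"]) auto
  next
    fix x assume "x \<in> (\<lambda>j. ps ! j) ` {..<length ps - 1}"
    then obtain j where "j < length ps - 1" "x = ps ! j" by auto
    then show "x \<in> Des (consecutive_diffs ps)"
      unfolding Des_def using take_Suc[of j] by (intro CollectI exI[of _ "Suc j"]) auto
  qed
  also have "\<dots> = (\<lambda>j. butlast ps ! j) ` {..<length (butlast ps)}"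
    by (intro image_cong) (simp_all add: nth_butlast)
  also have "\<dots> = set (butlast ps)"
    by (auto simp: in_set_conv_nth)
  finally show ?thesis .
qed

lemma sorted_list_of_set_set_strict: "sorted_wrt (<) l \<Longrightarrow> sorted_list_of_set (set l) = l"
  by (metis sorted_list_of_set_sort_remdups strict_sorted_iff distinct_remdups_id sorted_sort_id)

lemma comp_of_eq_consecutive_diffs:
  assumes "1 \<le> N"
  shows "comp_of N D = consecutive_diffs (sorted_list_of_set {p\<in>D. 0 < p \<and> p < N} @ [N])"
proof -
  let ?E = "{p\<in>D. 0 < p \<and> p < N}"
  let ?ps = "sorted_list_of_set ?E @ [N]"
  have fin: "finite ?E" by (rule finite_subset[of _ "{..<N}"]) auto
  then have "sorted_wrt (<) ?ps"
    by (auto simp: sorted_wrt_append strict_sorted_list_of_set)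
  then have "sorted_list_of_set (set ?ps) = ?ps"
    by (rule sorted_list_of_set_set_strict)
  then have "sorted_list_of_set (?E \<union> {N}) = ?ps"
    using fin by simp
  then show ?thesis
    unfolding comp_of_def consecutive_diffs_def Let_def by simp
qed

lemma
  assumes "1 \<le> N"
  shows Des_comp_of: "Des (comp_of N D) = {p\<in>D. 0 < p \<and> p < N}"
    and length_comp_of: "length (comp_of N D) = card {p\<in>D. 0 < p \<and> p < N} + 1"
    and is_comp_comp_of: "is_comp (comp_of N D)"
    and sum_list_comp_of: "sum_list (comp_of N D) = N"
proof -
  let ?E = "{p\<in>D. 0 < p \<and> p < N}"
  define es where "es = sorted_list_of_set ?E"
  have comp: "comp_of N D = consecutive_diffs (es @ [N])"
    unfolding es_def by (rule comp_of_eq_consecutive_diffs[OF assms])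
  have fin: "finite ?E" by (rule finite_subset[of _ "{..<N}"]) auto
  then have set_es: "set es = ?E" and length_es: "length es = card ?E"
    unfolding es_def by simp_all
  have strict: "sorted_wrt (<) (es @ [N])"
    using fin unfolding es_def by (auto simp: sorted_wrt_append strict_sorted_list_of_set)
  then have sorted: "sorted (es @ [N])"
    by (simp add: sorted_wrt_mono_rel[of _ "(<)" "(\<le>)"])
  show "Des (comp_of N D) = ?E"
    by (simp add: comp Des_consecutive_diffs[OF sorted] set_es)
  show "length (comp_of N D) = card ?E + 1"
    by (simp add: comp length_es)
  show "is_comp (comp_of N D)"
    unfolding comp by (rule is_comp_consecutive_diffs[OF strict]) (use set_es assms in auto)
  show "sum_list (comp_of N D) = N"
    using sum_list_take_consecutive_diffs[OF sorted, of "Suc (length es)"]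
    by (simp add: comp nth_append)
qed

lemma length_partial_sums [simp]: "length (partial_sums I) = length I"
  by (simp add: partial_sums_def)

lemma nth_partial_sums: "i < length I \<Longrightarrow> partial_sums I ! i = sum_list (take (Suc i) I)"
  by (simp add: partial_sums_def)

lemma sum_list_take_less:
  assumes "is_comp I" and "i < j" and "j \<le> length I"
  shows "sum_list (take i I) < sum_list (take j I)"
proof -
  have "take j I = take i I @ drop i (take j I)"
    using assms(2) by (metis append_take_drop_id less_imp_le min.absorb1 take_take)
  moreover have "\<forall>x\<in>set (drop i (take j I)). 0 < x"
    using assms(1) by (auto simp: is_comp_def dest: in_set_takeD in_set_dropD)
  then have "0 < sum_list (drop i (take j I))"
    using assms(2,3) by (cases "drop i (take j I)") auto
  ultimately show ?thesis
    by (metis sum_list_append less_add_same_cancel1)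
qed

lemma strict_sorted_partial_sums: "is_comp I \<Longrightarrow> sorted_wrt (<) (partial_sums I)"
  by (auto simp: sorted_wrt_iff_nth_less nth_partial_sums intro: sum_list_take_less)

lemma consecutive_diffs_partial_sums: "consecutive_diffs (partial_sums I) = I"
proof (rule nth_equalityI)
  fix i assume "i < length (consecutive_diffs (partial_sums I))"
  then show "consecutive_diffs (partial_sums I) ! i = I ! i"
    by (cases i) (simp_all add: nth_consecutive_diffs nth_partial_sums take_Suc_conv_app_nth)
qed simp

lemma Des_eq_partial_sums: "is_comp I \<Longrightarrow> Des I = set (butlast (partial_sums I))"
  using Des_consecutive_diffs[of "partial_sums I"] strict_sorted_partial_sums[of I]
  by (simp add: consecutive_diffs_partial_sums sorted_wrt_mono_rel[of _ "(<)" "(\<le>)"])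

lemma finite_Des [simp]: "finite (Des I)"
proof (rule finite_subset)
  show "Des I \<subseteq> (\<lambda>j. sum_list (take j I)) ` {..<length I}"
    unfolding Des_def by auto
qed simp

lemma card_Des: "is_comp I \<Longrightarrow> card (Des I) = length I - 1"
  using strict_sorted_partial_sums[of I]
  by (simp add: Des_eq_partial_sums distinct_card strict_sorted_iff distinct_butlast)

lemma Des_bounds:
  assumes "is_comp I" and "p \<in> Des I"
  shows "0 < p \<and> p < sum_list I"
proof -
  obtain j where "0 < j" "j < length I" "p = sum_list (take j I)"
    using assms(2) unfolding Des_def by auto
  then show ?thesis
    using sum_list_take_less[OF assms(1), of 0 j] sum_list_take_less[OF assms(1), of j "length I"]
    by simp
qed

lemma comp_of_Des:
  assumes "is_comp I" and "sum_list I = N" and "1 \<le> N"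
  shows "comp_of N (Des I) = I"
proof -
  have ne: "I \<noteq> []" using assms by auto
  have strict: "sorted_wrt (<) (butlast (partial_sums I))"
    using strict_sorted_partial_sums[OF assms(1)] by (simp add: butlast_conv_take)
  have "{p\<in>Des I. 0 < p \<and> p < N} = Des I"
    using Des_bounds[OF assms(1)] assms(2) by auto
  then have "sorted_list_of_set {p\<in>Des I. 0 < p \<and> p < N} = butlast (partial_sums I)"
    using sorted_list_of_set_set_strict[OF strict] by (simp add: Des_eq_partial_sums[OF assms(1)])
  moreover have "last (partial_sums I) = N"
    using ne assms(2) by (simp add: partial_sums_def last_map)
  then have "butlast (partial_sums I) @ [N] = partial_sums I"
    using ne by (metis append_butlast_last_id length_0_conv length_partial_sums)
  ultimately show ?thesis
    using assms(3) by (simp add: comp_of_eq_consecutive_diffs consecutive_diffs_partial_sums)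
qed

lemma nondec_word_snoc: "nondec_word (J @ [x]) = nondec_word J @ replicate x (Suc (length J))"
  unfolding nondec_word_def
  by (simp add: nth_append) (rule arg_cong[of _ _ concat], rule map_cong, simp_all)

lemma length_nondec_word: "length (nondec_word J) = sum_list J"
proof (induction J rule: rev_induct)
  case Nil
  then show ?case by (simp add: nondec_word_def)
qed (simp add: nondec_word_snoc)

lemma Des_snoc: "Des (J @ [x]) = (if J = [] then {} else insert (sum_list J) (Des J))"
proof -
  have "Des (J @ [x]) = (\<lambda>j. sum_list (take j J)) ` {j. 0 < j \<and> j \<le> length J}"
    unfolding Des_def setcompr_eq_image by (rule image_cong) (auto simp: less_Suc_eq_le)
  also have "\<dots> = (if J = [] then {} else insert (sum_list J) (Des J))"
    unfolding Des_def by (auto simp: le_less intro: image_eqI[of _ _ "length J"])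
  finally show ?thesis .
qed

lemma Des_singleton [simp]: "Des [x] = {}"
  by (simp add: Des_def)

lemma nth_nondec_word:
  assumes "is_comp J" and "a < sum_list J"
  shows "nondec_word J ! a = Suc (card {d\<in>Des J. d \<le> a})"
  using assms
proof (induction J arbitrary: a rule: rev_induct)
  case (snoc x J)
  have J: "is_comp J"
    using snoc.prems(1) by (simp add: is_comp_def)
  show ?case
  proof (cases "a < sum_list J")
    case True
    then have "{d\<in>Des (J @ [x]). d \<le> a} = {d\<in>Des J. d \<le> a}"
      by (auto simp: Des_snoc)
    with snoc.IH[OF J True] True show ?thesis
      by (simp add: nondec_word_snoc nth_append length_nondec_word)
  next
    case False
    then have "nondec_word (J @ [x]) ! a = Suc (length J)"
      using snoc.prems by (simp add: nondec_word_snoc nth_append length_nondec_word)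
    moreover have "card {d\<in>Des (J @ [x]). d \<le> a} = length J"
    proof (cases "J = []")
      case False
      have "{d\<in>Des (J @ [x]). d \<le> a} = insert (sum_list J) (Des J)"
        using \<open>\<not> a < sum_list J\<close> Des_bounds[OF J] False by (force simp: Des_snoc)
      moreover have "sum_list J \<notin> Des J"
        using Des_bounds[OF J] by blast
      ultimately show ?thesis
        using card_Des[OF J] False by simp
    qed simp
    ultimately show ?thesis by simp
  qed
qed simp

lemma set_nondec_word:
  assumes "is_comp J"
  shows "set (nondec_word J) = {1..length J}"
proof -
  have "set (nondec_word J) = Suc ` {..<length J}"
    using assms unfolding nondec_word_def is_comp_def
    by (auto simp: atLeast0LessThan set_replicate_conv_if)
  also have "\<dots> = {1..length J}"
    by (rule image_Suc_lessThan)
  finally show ?thesis .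
qed

lemma sorted_nondec_word: "is_comp J \<Longrightarrow> sorted (nondec_word J)"
  by (auto simp: sorted_iff_nth_mono length_nondec_word nth_nondec_word intro!: card_mono)

lemma nondec_word_step_iff:
  assumes "is_comp J" and "0 < a" and "a < sum_list J"
  shows "nondec_word J ! (a - 1) \<noteq> nondec_word J ! a \<longleftrightarrow> a \<in> Des J"
proof -
  have "{d\<in>Des J. d \<le> a - 1} = {d\<in>Des J. d < a}"
    using assms(2) by auto
  moreover have "{d\<in>Des J. d \<le> a} = (if a \<in> Des J then insert a {d\<in>Des J. d < a} else {d\<in>Des J. d < a})"
    by (auto simp: le_less)
  ultimately show ?thesis
    using assms by (simp add: nth_nondec_word)
qed

section \<open>Relative order of words\<close>

lemma card_image_eq_if_same_kernel:
  assumes "\<And>a b. a \<in> J \<Longrightarrow> b \<in> J \<Longrightarrow> f a = f b \<longleftrightarrow> g a = g b"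
  shows "card (f ` J) = card (g ` J)"
proof (rule bij_betw_same_card)
  have g_inv: "g (inv_into J f (f a)) = g a" if "a \<in> J" for a
    using assms[of "inv_into J f (f a)" a] that by (simp add: inv_into_into f_inv_into_f)
  show "bij_betw (\<lambda>x. g (inv_into J f x)) (f ` J) (g ` J)"
  proof (rule bij_betw_imageI)
    show "inj_on (\<lambda>x. g (inv_into J f x)) (f ` J)"
      using assms by (auto simp: inj_on_def g_inv)
    show "(\<lambda>x. g (inv_into J f x)) ` f ` J = g ` J"
      by (auto simp: g_inv image_comp)
  qed
qed

definition same_order :: "'a::linorder list \<Rightarrow> 'b::linorder list \<Rightarrow> bool" where
  "same_order w z \<longleftrightarrow> length w = length z \<and>
     (\<forall>i<length w. \<forall>j<length w. w ! i \<le> w ! j \<longleftrightarrow> z ! i \<le> z ! j)"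

(* \<open>pack\<close> for an arbitrary linear order; the words built below have letters in \<open>nat \<times> nat\<close> *)
definition rank_word :: "'a::linorder list \<Rightarrow> nat list" where
  "rank_word w = map (\<lambda>x. card {y\<in>set w. y \<le> x}) w"

lemma pack_eq_rank_word: "pack w = rank_word w"
  by (simp add: pack_def rank_word_def)

lemma same_order_length: "same_order w z \<Longrightarrow> length w = length z"
  by (simp add: same_order_def)

lemma same_order_sym: "same_order w z \<Longrightarrow> same_order z w"
  by (auto simp: same_order_def)

lemma same_order_take: "same_order w z \<Longrightarrow> same_order (take k w) (take k z)"
  by (auto simp: same_order_def)

lemma same_order_drop: "same_order w z \<Longrightarrow> same_order (drop k w) (drop k z)"
  by (auto simp: same_order_def)

lemma same_order_nth_le_iff:
  "same_order w z \<Longrightarrow> i < length w \<Longrightarrow> j < length w \<Longrightarrow> w ! i \<le> w ! j \<longleftrightarrow> z ! i \<le> z ! j"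
  by (simp add: same_order_def)

lemma same_order_nth_eq_iff:
  "same_order w z \<Longrightarrow> i < length w \<Longrightarrow> j < length w \<Longrightarrow> w ! i = w ! j \<longleftrightarrow> z ! i = z ! j"
  by (simp add: order.eq_iff same_order_nth_le_iff)

lemma same_order_nth_less_iff:
  "same_order w z \<Longrightarrow> i < length w \<Longrightarrow> j < length w \<Longrightarrow> w ! i < w ! j \<longleftrightarrow> z ! i < z ! j"
  by (simp add: not_le[symmetric] same_order_nth_le_iff)

lemma same_order_sorted: "same_order w z \<Longrightarrow> sorted w \<longleftrightarrow> sorted z"
  by (auto simp: same_order_def sorted_iff_nth_mono)

lemma same_order_map_strict_mono:
  assumes "strict_mono_on (set w) f"
  shows "same_order (map f w) w"
  using assms by (auto simp: same_order_def strict_mono_on_less_eq)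

lemma card_filter_le_mono_iff:
  fixes a b :: "'a::linorder"
  assumes "finite A" and "b \<in> A"
  shows "card {y\<in>A. y \<le> b} \<le> card {y\<in>A. y \<le> a} \<longleftrightarrow> b \<le> a"
proof
  assume "card {y\<in>A. y \<le> b} \<le> card {y\<in>A. y \<le> a}"
  moreover have "card {y\<in>A. y \<le> a} < card {y\<in>A. y \<le> b}" if "a < b"
  proof (rule psubset_card_mono)
    have "b \<in> {y\<in>A. y \<le> b} - {y\<in>A. y \<le> a}"
      using assms(2) that by auto
    then show "{y\<in>A. y \<le> a} \<subset> {y\<in>A. y \<le> b}"
      using that by (intro psubsetI) auto
  qed (use assms in simp)
  ultimately show "b \<le> a" by (meson not_le)
qed (use assms in \<open>auto intro: card_mono\<close>)

lemma length_rank_word [simp]: "length (rank_word w) = length w"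
  by (simp add: rank_word_def)

lemma nth_rank_word: "i < length w \<Longrightarrow> rank_word w ! i = card {y\<in>set w. y \<le> w ! i}"
  by (simp add: rank_word_def)

lemma same_order_rank_word: "same_order (rank_word w) w"
  by (simp add: same_order_def nth_rank_word card_filter_le_mono_iff)

lemma rank_word_eq_if_same_order:
  assumes "same_order w z"
  shows "rank_word w = rank_word z"
proof (rule nth_equalityI)
  fix i assume "i < length (rank_word w)"
  then have i: "i < length w" by simp
  let ?J = "{j. j < length w \<and> w ! j \<le> w ! i}"
  have "{y\<in>set w. y \<le> w ! i} = (!) w ` ?J" and "{y\<in>set z. y \<le> z ! i} = (!) z ` ?J"
    using same_order_nth_le_iff[OF assms _ i] same_order_length[OF assms]
    by (auto simp: in_set_conv_nth)
  moreover have "card ((!) w ` ?J) = card ((!) z ` ?J)"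
    using same_order_nth_eq_iff[OF assms] by (intro card_image_eq_if_same_kernel) auto
  ultimately show "rank_word w ! i = rank_word z ! i"
    using i same_order_length[OF assms] by (simp add: nth_rank_word)
qed (use same_order_length[OF assms] in simp)

lemma set_rank_word: "set (rank_word w) = {1..card (set w)}"
proof -
  let ?r = "\<lambda>x. card {y\<in>set w. y \<le> x}"
  have "inj_on ?r (set w)"
  proof (rule inj_onI)
    fix a b assume "a \<in> set w" "b \<in> set w" "?r a = ?r b"
    then show "a = b"
      using card_filter_le_mono_iff[of "set w" a b] card_filter_le_mono_iff[of "set w" b a] by simp
  qed
  moreover have "?r a \<in> {1..card (set w)}" if "a \<in> set w" for a
  proof -
    have "0 < ?r a"
      using that by (subst card_gt_0_iff) auto
    moreover have "?r a \<le> card (set w)"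
      by (rule card_mono) auto
    ultimately show ?thesis by simp
  qed
  ultimately have "?r ` set w = {1..card (set w)}"
    by (intro card_subset_eq) (auto simp: card_image)
  then show ?thesis
    by (simp add: rank_word_def)
qed

lemma packed_rank_word: "packed (rank_word w)"
  by (simp add: packed_def set_rank_word)

lemma rank_word_packed:
  assumes "packed w"
  shows "rank_word w = w"
proof (rule nth_equalityI)
  fix i assume "i < length (rank_word w)"
  then have i: "i < length w" by simp
  obtain M where M: "set w = {1..M}"
    using assms unfolding packed_def by blast
  then have "w ! i \<in> {1..M}"
    using i by (metis nth_mem)
  then have "{y\<in>set w. y \<le> w ! i} = {1..w ! i}"
    using M by auto
  then show "rank_word w ! i = w ! i"
    using i by (simp add: nth_rank_word)
qed simp

definition count_below :: "'a::linorder set \<Rightarrow> 'a \<Rightarrow> nat" where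
  "count_below A a = card {b\<in>A. b < a}"

lemma count_below_mono: "finite A \<Longrightarrow> a \<le> a' \<Longrightarrow> count_below A a \<le> count_below A a'"
  unfolding count_below_def by (rule card_mono) auto

lemma count_below_strict_mono:
  assumes "finite A" and "a \<in> A" and "a < a'"
  shows "count_below A a < count_below A a'"
  unfolding count_below_def
proof (rule psubset_card_mono)
  show "{b\<in>A. b < a} \<subset> {b\<in>A. b < a'}"
    using assms(2,3) by (intro psubsetI) auto
qed (use assms in simp)

lemma count_below_le_card: "finite A \<Longrightarrow> count_below A a \<le> card A"
  unfolding count_below_def by (rule card_mono) auto

lemma count_below_less_card: "finite A \<Longrightarrow> a \<in> A \<Longrightarrow> count_below A a < card A"
  unfolding count_below_def by (rule psubset_card_mono) auto

lemma count_below_le_iff: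
  "finite A \<Longrightarrow> a \<in> A \<Longrightarrow> b \<le> a \<longleftrightarrow> count_below A b \<le> count_below A a"
  by (metis count_below_mono count_below_strict_mono not_le)

lemma count_below_less_iff:
  "finite A \<Longrightarrow> a \<in> A \<Longrightarrow> b \<notin> A \<Longrightarrow> a < b \<longleftrightarrow> count_below A a < count_below A b"
  by (metis count_below_le_iff count_below_strict_mono leD le_less not_le)

lemma in_set_drop_iff: "x \<in> set (drop p w) \<longleftrightarrow> (\<exists>j. p \<le> j \<and> j < length w \<and> w ! j = x)"
proof
  assume "x \<in> set (drop p w)"
  then obtain i where "i < length (drop p w)" "drop p w ! i = x"
    by (auto simp: in_set_conv_nth)
  then show "\<exists>j. p \<le> j \<and> j < length w \<and> w ! j = x"
    by (intro exI[of _ "p + i"]) auto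
next
  assume "\<exists>j. p \<le> j \<and> j < length w \<and> w ! j = x"
  then obtain j where "p \<le> j" "j < length w" "w ! j = x" by blast
  then show "x \<in> set (drop p w)"
    unfolding in_set_conv_nth by (intro exI[of _ "j - p"]) auto
qed

lemma count_below_drop_same_order:
  assumes "same_order w z" and "i < length w"
  shows "count_below (set (drop k w)) (w ! i) = count_below (set (drop k z)) (z ! i)"
proof -
  let ?J = "{j. k \<le> j \<and> j < length w \<and> w ! j < w ! i}"
  have "{b\<in>set (drop k w). b < w ! i} = (!) w ` ?J"
    by (auto simp: in_set_drop_iff)
  moreover have "{b\<in>set (drop k z). b < z ! i} = (!) z ` ?J"
    using same_order_nth_less_iff[OF assms(1) _ assms(2)] same_order_length[OF assms(1)]
    by (auto simp: in_set_drop_iff)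
  moreover have "card ((!) w ` ?J) = card ((!) z ` ?J)"
    using same_order_nth_eq_iff[OF assms(1)] by (intro card_image_eq_if_same_kernel) auto
  ultimately show ?thesis
    by (simp add: count_below_def)
qed

lemma wdes_iff:
  "p \<in> wdes w \<longleftrightarrow> 1 \<le> p \<and> p < length w \<and> (\<forall>j. p \<le> j \<and> j < length w \<longrightarrow> w ! j \<noteq> w ! (p - 1))"
  unfolding wdes_def in_set_drop_iff by blast

lemma sinv_sorted:
  assumes "sorted w"
  shows "sinv w = 0"
proof -
  have "{(i, j). i < j \<and> j < length w \<and> w ! i > w ! j \<and> w ! j \<notin> set (drop (Suc j) w)} = {}"
    using assms by (auto simp: sorted_iff_nth_mono leD)
  then show ?thesis
    unfolding sinv_def by (simp only: card.empty)
qed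

lemma card_last_occurrences:
  "card {j. k \<le> j \<and> j < length w \<and> P (w ! j) \<and> w ! j \<notin> set (drop (Suc j) w)} =
   card {b\<in>set (drop k w). P b}"
proof (rule bij_betw_same_card[of "(!) w"], rule bij_betwI')
  let ?L = "{j. k \<le> j \<and> j < length w \<and> P (w ! j) \<and> w ! j \<notin> set (drop (Suc j) w)}"
  fix i j assume "i \<in> ?L" "j \<in> ?L"
  then show "w ! i = w ! j \<longleftrightarrow> i = j"
    by (auto simp: in_set_drop_iff) (metis linorder_neqE_nat Suc_leI)
next
  let ?L = "{j. k \<le> j \<and> j < length w \<and> P (w ! j) \<and> w ! j \<notin> set (drop (Suc j) w)}"
  fix b assume "b \<in> {b\<in>set (drop k w). P b}"
  then have b: "P b" "\<exists>j. k \<le> j \<and> j < length w \<and> w ! j = b"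
    by (auto simp: in_set_drop_iff)
  define j where "j = Max {j. k \<le> j \<and> j < length w \<and> w ! j = b}"
  have fin: "finite {j. k \<le> j \<and> j < length w \<and> w ! j = b}" by simp
  have "{j. k \<le> j \<and> j < length w \<and> w ! j = b} \<noteq> {}"
    using b(2) by blast
  from Max_in[OF fin this] have j: "k \<le> j" "j < length w" "w ! j = b"
    unfolding j_def[symmetric] by auto
  moreover have "b \<notin> set (drop (Suc j) w)"
  proof
    assume "b \<in> set (drop (Suc j) w)"
    then obtain l where "Suc j \<le> l" "l < length w" "w ! l = b"
      by (auto simp: in_set_drop_iff)
    then show False
      using Max_ge[OF fin, of l] j(1) unfolding j_def[symmetric] by simp
  qed
  ultimately show "\<exists>j\<in>?L. b = w ! j"
    using b(1) by auto
qed (auto simp: in_set_drop_iff)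

section \<open>The coefficient as a sum over words\<close>

lemma finite_packed_words: "finite {u. packed u \<and> length u = N}"
proof (rule finite_subset)
  show "{u. packed u \<and> length u = N} \<subseteq> {u. set u \<subseteq> {1..N} \<and> length u = N}"
  proof safe
    fix u x assume "packed u" "x \<in> set u"
    then obtain M where "set u = {1..M}" "x \<in> {1..M}"
      unfolding packed_def by blast
    then show "x \<in> {1..length u}"
      using card_length[of u] by auto
  qed
qed (simp add: finite_lists_length_eq)

lemma WC_eq_iff:
  assumes "is_comp I" and "length u = sum_list I" and "1 \<le> sum_list I"
  shows "WC u = I \<longleftrightarrow> wdes u = Des I"
proof
  assume "WC u = I"
  then have "Des I = {p\<in>wdes u. 0 < p \<and> p < length u}"
    using Des_comp_of[of "length u" "wdes u"] assms(2,3) by (simp add: WC_def)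
  moreover have "{p\<in>wdes u. 0 < p \<and> p < length u} = wdes u"
    by (auto simp: wdes_def)
  ultimately show "wdes u = Des I"
    by simp
next
  assume "wdes u = Des I"
  then show "WC u = I"
    using comp_of_Des[OF assms(1) refl assms(3)] assms(2) by (simp add: WC_def)
qed

lemma qstar_S_tilde_M_apply:
  assumes "packed u" and "k \<le> length u" and "sorted w"
  shows "qstar (S_tilde k) (M w) u =
    (if sorted (take k u) \<and> pack (drop k u) = w then qX ^ sinv u else (0::'a::field_char_0 poly fract))"
proof -
  define F :: "nat \<Rightarrow> 'a poly fract" where "F i = S_tilde k (pack (take i u)) * M w (pack (drop i u)) *
    qX powi (int (sinv u) - int (sinv (pack (take i u))) - int (sinv (pack (drop i u))))" for i
  have F_zero: "F i = 0" if "i \<le> length u" "i \<noteq> k" for i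
    using that by (simp add: F_def S_tilde_def pack_eq_rank_word)
  have "qstar (S_tilde k) (M w) u = sum F {0..length u}"
    using assms(1) by (simp add: qstar_def F_def)
  also have "\<dots> = sum F {k}"
    using F_zero assms(2) by (intro sum.mono_neutral_right) auto
  also have "\<dots> = F k"
    by simp
  also have "\<dots> = (if sorted (take k u) \<and> pack (drop k u) = w then qX ^ sinv u else 0)"
  proof -
    have sorted_iff: "sorted (pack (take k u)) \<longleftrightarrow> sorted (take k u)"
      by (simp add: pack_eq_rank_word same_order_sorted[OF same_order_rank_word])
    have prefix: "S_tilde k (pack (take k u)) = (if sorted (take k u) then 1 else 0)"
      using assms(2) packed_rank_word[of "take k u"] sorted_iff by (simp add: S_tilde_def pack_eq_rank_word)
    show ?thesis
    proof (cases "sorted (take k u) \<and> pack (drop k u) = w")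
      case True
      then have "sinv (pack (take k u)) = 0" "sinv (pack (drop k u)) = 0"
        using sorted_iff assms(3) by (simp_all add: sinv_sorted)
      with True show ?thesis
        by (simp add: F_def prefix M_def power_int_of_nat)
    next
      case False
      then have zero: "S_tilde k (pack (take k u)) * M w (pack (drop k u)) = 0"
        by (simp add: prefix M_def)
      show ?thesis
        unfolding if_not_P[OF False] F_def by (simp only: zero mult_zero_left)
    qed
  qed
  finally show ?thesis .
qed

section \<open>The words contributing to the coefficient\<close>

locale split_composition =
  fixes k n :: nat and I :: "nat list"
  assumes k_pos: "1 \<le> k" and n_pos: "1 \<le> n"
    and is_comp_I: "is_comp I" and sum_list_I: "sum_list I = k + n"
begin

definition Des_tail :: "nat set" where
  "Des_tail = {a. 1 \<le> a \<and> k + a \<in> Des I}"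

definition tail_comp :: "nat list" where
  "tail_comp = comp_of n Des_tail"

definition v :: "nat list" where
  "v = nondec_word tail_comp"

definition m :: nat where
  "m = length tail_comp"

(* 0-based: \<open>i \<in> Des_head\<close> iff position \<open>i + 1 \<le> k\<close> is a descent of \<open>I\<close> *)
definition Des_head :: "nat set" where
  "Des_head = {i. i < k \<and> Suc i \<in> Des I}"

(* the count \<open>m\<close> puts the last letter of the prefix above all of the suffix, forcing \<open>k \<in> Des I\<close> *)
definition count_bound :: nat where
  "count_bound = m + (if k \<in> Des I then 1 else 0)"

lemma Des_I_bounds: "p \<in> Des I \<Longrightarrow> 0 < p \<and> p < k + n"
  using Des_bounds[OF is_comp_I] sum_list_I by simp

lemma Des_tail_restrict: "{p\<in>Des_tail. 0 < p \<and> p < n} = Des_tail"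
  unfolding Des_tail_def using Des_I_bounds by fastforce

lemma finite_Des_tail: "finite Des_tail"
  by (rule finite_subset[of _ "{..<n}"]) (use Des_tail_restrict in blast, simp)

lemma
  shows Des_tail_comp: "Des tail_comp = Des_tail"
    and m_eq_card_Des_tail: "m = card Des_tail + 1"
    and is_comp_tail_comp: "is_comp tail_comp"
    and sum_list_tail_comp: "sum_list tail_comp = n"
  using Des_comp_of[OF n_pos, of Des_tail] length_comp_of[OF n_pos, of Des_tail]
    is_comp_comp_of[OF n_pos, of Des_tail] sum_list_comp_of[OF n_pos, of Des_tail]
  unfolding tail_comp_def m_def Des_tail_restrict by auto

lemma length_v: "length v = n"
  by (simp add: v_def length_nondec_word sum_list_tail_comp)

lemma set_v: "set v = {1..m}"
  by (simp add: v_def m_def set_nondec_word is_comp_tail_comp)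

lemma sorted_v: "sorted v"
  by (simp add: v_def sorted_nondec_word is_comp_tail_comp)

lemma packed_v: "packed v"
  by (simp add: packed_def set_v)

lemma nth_v_bounds: "a < n \<Longrightarrow> 1 \<le> v ! a \<and> v ! a \<le> m"
  using set_v length_v by (metis atLeastAtMost_iff nth_mem)

lemma v_step_iff: "0 < a \<Longrightarrow> a < n \<Longrightarrow> v ! (a - 1) \<noteq> v ! a \<longleftrightarrow> k + a \<in> Des I"
  using nondec_word_step_iff[OF is_comp_tail_comp, of a]
  by (simp add: v_def sum_list_tail_comp Des_tail_comp Des_tail_def)

lemma finite_Des_head: "finite Des_head"
  by (simp add: Des_head_def)

lemma k_in_Des_iff: "k \<in> Des I \<longleftrightarrow> k - 1 \<in> Des_head"
  using k_pos by (auto simp: Des_head_def)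

lemma card_Des_head_less: "i < k \<Longrightarrow> card {d\<in>Des_head. d < i} < k"
  using card_mono[of "{..<i}" "{d\<in>Des_head. d < i}"] by force

lemma card_Des_head_eq_iff:
  assumes "j \<le> i"
  shows "card {d\<in>Des_head. d < j} = card {d\<in>Des_head. d < i} \<longleftrightarrow> (\<forall>d\<in>Des_head. \<not> (j \<le> d \<and> d < i))"
proof
  assume "card {d\<in>Des_head. d < j} = card {d\<in>Des_head. d < i}"
  then have "{d\<in>Des_head. d < j} = {d\<in>Des_head. d < i}"
    using assms finite_Des_head by (intro card_subset_eq) auto
  then show "\<forall>d\<in>Des_head. \<not> (j \<le> d \<and> d < i)"
    by (metis (mono_tags, lifting) mem_Collect_eq not_le)
next
  assume "\<forall>d\<in>Des_head. \<not> (j \<le> d \<and> d < i)"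
  then have "{d\<in>Des_head. d < j} = {d\<in>Des_head. d < i}"
    using assms by force
  then show "card {d\<in>Des_head. d < j} = card {d\<in>Des_head. d < i}" by simp
qed

definition contributing_words :: "nat list set" where
  "contributing_words =
  {u. packed u \<and> length u = k + n \<and> wdes u = Des I \<and> sorted (take k u) \<and> pack (drop k u) = v}"

definition below_counts :: "nat list \<Rightarrow> nat list" where
  "below_counts u = map (count_below (set (drop k u))) (take k u)"

(* in terms of the counts: the prefix letter at \<open>i\<close> does not occur in the suffix *)
definition fresh :: "nat list \<Rightarrow> nat \<Rightarrow> bool" where
  "fresh h i \<longleftrightarrow> (\<exists>d\<in>Des_head. i \<le> d \<and> h ! d = h ! i)"

(* Keys realising counts \<open>h\<close>: a letter with \<open>b\<close> smaller suffix letters gets \<open>(b, k)\<close> if it occurs in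
   the suffix, and otherwise \<open>(b, number of prefix descents before it)\<close>; two prefix letters of the
   latter kind coincide iff no descent separates them. *)
definition key :: "nat list \<Rightarrow> nat \<Rightarrow> nat \<times> nat" where
  "key h i = (if k \<le> i then (v ! (i - k) - 1, k)
              else if fresh h i then (h ! i, card {d\<in>Des_head. d < i})
              else (h ! i, k))"

definition keyword :: "nat list \<Rightarrow> (nat \<times> nat) list" where
  "keyword h = map (key h) [0..<k + n]"

lemma contributing_length: "u \<in> contributing_words \<Longrightarrow> length u = k + n"
  by (simp add: contributing_words_def)

lemma contributing_prefix_mono: "u \<in> contributing_words \<Longrightarrow> i \<le> j \<Longrightarrow> j < k \<Longrightarrow> u ! i \<le> u ! j"
  using sorted_nth_mono[of "take k u" i j] by (simp add: contributing_words_def)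

lemma contributing_same_order_v: "u \<in> contributing_words \<Longrightarrow> same_order (drop k u) v"
  using same_order_rank_word[of "drop k u"] by (auto simp: contributing_words_def pack_eq_rank_word intro: same_order_sym)

lemma contributing_suffix_mono:
  assumes "u \<in> contributing_words" and "k \<le> i" and "i \<le> j" and "j < k + n"
  shows "u ! i \<le> u ! j"
proof -
  have "sorted (drop k u)"
    using same_order_sorted[OF contributing_same_order_v[OF assms(1)]] sorted_v by simp
  then show ?thesis
    using sorted_nth_mono[of "drop k u" "i - k" "j - k"] assms contributing_length[OF assms(1)] by simp
qed

lemma contributing_card_suffix: "u \<in> contributing_words \<Longrightarrow> card (set (drop k u)) = m"
  using set_rank_word[of "drop k u"] set_v m_eq_card_Des_tail by (simp add: contributing_words_def pack_eq_rank_word)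

lemma contributing_count_below_suffix:
  assumes "u \<in> contributing_words" and "a < n"
  shows "count_below (set (drop k u)) (u ! (k + a)) = v ! a - 1"
proof -
  let ?Y = "set (drop k u)"
  have a: "a < length (drop k u)" and ya: "drop k u ! a = u ! (k + a)"
    using assms contributing_length[OF assms(1)] by simp_all
  then have "u ! (k + a) \<in> ?Y"
    by (metis nth_mem)
  then have "{y\<in>?Y. y \<le> u ! (k + a)} = insert (u ! (k + a)) {y\<in>?Y. y < u ! (k + a)}"
    by auto
  then have "rank_word (drop k u) ! a = Suc (count_below ?Y (u ! (k + a)))"
    using a ya by (simp add: nth_rank_word count_below_def)
  then show ?thesis
    using assms(1) by (simp add: contributing_words_def pack_eq_rank_word)
qed

lemma contributing_Des_head_iff:
  assumes "u \<in> contributing_words" and "i < k"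
  shows "i \<in> Des_head \<longleftrightarrow> u ! i \<notin> set (drop (Suc i) u)"
proof -
  have "Suc i \<in> Des I \<longleftrightarrow> Suc i \<in> wdes u"
    using assms(1) by (simp add: contributing_words_def)
  also have "\<dots> \<longleftrightarrow> u ! i \<notin> set (drop (Suc i) u)"
    using assms n_pos by (simp add: wdes_def contributing_length)
  finally show ?thesis
    using assms(2) by (simp add: Des_head_def)
qed

lemma length_below_counts: "u \<in> contributing_words \<Longrightarrow> length (below_counts u) = k"
  by (simp add: below_counts_def contributing_length)

lemma nth_below_counts:
  "u \<in> contributing_words \<Longrightarrow> i < k \<Longrightarrow> below_counts u ! i = count_below (set (drop k u)) (u ! i)"
  by (simp add: below_counts_def contributing_length)

lemma contributing_last_occurrence:
  assumes u: "u \<in> contributing_words" and i: "i < k" and fresh_letter: "u ! i \<notin> set (drop k u)"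
  obtains d where "d \<in> Des_head" "i \<le> d" "u ! d = u ! i"
proof -
  define d where "d = Max {l. l < k \<and> u ! l = u ! i}"
  have fin: "finite {l. l < k \<and> u ! l = u ! i}" by simp
  have "d \<in> {l. l < k \<and> u ! l = u ! i}"
    unfolding d_def using i by (intro Max_in[OF fin]) auto
  then have d: "d < k" "u ! d = u ! i" by simp_all
  have "i \<le> d"
    unfolding d_def using i by (intro Max_ge[OF fin]) simp
  have later: "u ! l \<noteq> u ! i" if "d < l" "l < k" for l
    using Max_ge[OF fin, of l] that unfolding d_def[symmetric] by auto
  have "u ! d \<notin> set (drop (Suc d) u)"
  proof
    assume "u ! d \<in> set (drop (Suc d) u)"
    then obtain l where l: "d < l" "l < length u" "u ! l = u ! i"
      using d(2) by (auto simp: in_set_drop_iff Suc_le_eq)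
    show False
    proof (cases "l < k")
      case True
      with later l show False by blast
    next
      case False
      then have "u ! l \<in> set (drop k u)"
        using l(2) unfolding in_set_drop_iff by (auto simp: not_less)
      with l fresh_letter show False by simp
    qed
  qed
  then have "d \<in> Des_head"
    using contributing_Des_head_iff[OF u d(1)] by simp
  with that \<open>i \<le> d\<close> d show ?thesis by blast
qed

lemma contributing_fresh_iff:
  assumes u: "u \<in> contributing_words" and i: "i < k"
  shows "u ! i \<notin> set (drop k u) \<longleftrightarrow> fresh (below_counts u) i"
proof
  assume "u ! i \<notin> set (drop k u)"
  then obtain d where "d \<in> Des_head" "i \<le> d" "u ! d = u ! i"
    using contributing_last_occurrence[OF u i] by blast
  moreover have "d < k"
    using \<open>d \<in> Des_head\<close> by (simp add: Des_head_def)
  ultimately show "fresh (below_counts u) i"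
    using i unfolding fresh_def by (auto simp: nth_below_counts[OF u])
next
  let ?Y = "set (drop k u)"
  assume "fresh (below_counts u) i"
  then obtain d where d: "d \<in> Des_head" "i \<le> d" "below_counts u ! d = below_counts u ! i"
    unfolding fresh_def by blast
  have "d < k"
    using d(1) by (simp add: Des_head_def)
  have "u ! d \<notin> set (drop (Suc d) u)"
    using contributing_Des_head_iff[OF u \<open>d < k\<close>] d(1) by simp
  moreover have "?Y \<subseteq> set (drop (Suc d) u)"
    using \<open>d < k\<close> by (intro set_drop_subset_set_drop) simp
  ultimately have "u ! d \<notin> ?Y" by blast
  show "u ! i \<notin> ?Y"
  proof
    assume "u ! i \<in> ?Y"
    moreover have "u ! i \<le> u ! d"
      using contributing_prefix_mono[OF u d(2) \<open>d < k\<close>] .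
    ultimately have "count_below ?Y (u ! i) < count_below ?Y (u ! d)"
      using \<open>u ! d \<notin> ?Y\<close> by (intro count_below_strict_mono) (auto simp: le_less)
    then show False
      using d(3) i \<open>d < k\<close> by (simp add: nth_below_counts[OF u])
  qed
qed

lemma below_counts_mem:
  assumes u: "u \<in> contributing_words"
  shows "below_counts u \<in> sorted_lists_below k count_bound"
proof -
  let ?Y = "set (drop k u)"
  have "sorted (below_counts u)"
    using contributing_prefix_mono[OF u] count_below_mono[of ?Y]
    by (auto simp: sorted_iff_nth_mono length_below_counts[OF u] nth_below_counts[OF u])
  moreover have "below_counts u ! i < count_bound" if i: "i < k" for i
  proof (cases "below_counts u ! i < m")
    case False
    then have "\<not> count_below ?Y (u ! (k - 1)) < m"
      using count_below_mono[of ?Y "u ! i" "u ! (k - 1)"] contributing_prefix_mono[OF u, of i "k - 1"] i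
      by (simp add: nth_below_counts[OF u])
    then have "u ! (k - 1) \<notin> ?Y"
      using count_below_less_card[of ?Y] contributing_card_suffix[OF u] by auto
    then have "k - 1 \<in> Des_head"
      using contributing_Des_head_iff[OF u, of "k - 1"] k_pos by simp
    moreover have "below_counts u ! i \<le> m"
      using count_below_le_card[of ?Y] contributing_card_suffix[OF u] i by (simp add: nth_below_counts[OF u])
    ultimately show ?thesis
      by (simp add: count_bound_def k_in_Des_iff)
  qed (simp add: count_bound_def)
  ultimately show ?thesis
    by (auto simp: sorted_lists_below_def length_below_counts[OF u] in_set_conv_nth)
qed

lemma contributing_fresh_eq_iff:
  assumes u: "u \<in> contributing_words" and ji: "j < i" "i < k" and fresh_letter: "u ! j \<notin> set (drop k u)"
  shows "u ! j = u ! i \<longleftrightarrow> (\<forall>d\<in>Des_head. \<not> (j \<le> d \<and> d < i))"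
proof
  assume eq: "u ! j = u ! i"
  show "\<forall>d\<in>Des_head. \<not> (j \<le> d \<and> d < i)"
  proof (intro ballI notI)
    fix d assume "d \<in> Des_head" "j \<le> d \<and> d < i"
    moreover from this(2) have "u ! Suc d = u ! d"
      using eq contributing_prefix_mono[OF u, of j d] contributing_prefix_mono[OF u, of d "Suc d"]
        contributing_prefix_mono[OF u, of "Suc d" i] ji by simp
    then have "u ! d \<in> set (drop (Suc d) u)"
      using contributing_length[OF u] ji \<open>j \<le> d \<and> d < i\<close> unfolding in_set_drop_iff
      by (intro exI[of _ "Suc d"]) simp
    ultimately show False
      using contributing_Des_head_iff[OF u, of d] ji by simp
  qed
next
  assume no_end: "\<forall>d\<in>Des_head. \<not> (j \<le> d \<and> d < i)"
  obtain d where d: "d \<in> Des_head" "j \<le> d" "u ! d = u ! j"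
    using contributing_last_occurrence[OF u order.strict_trans[OF ji] fresh_letter] by blast
  then have "i \<le> d"
    using no_end by (meson not_le)
  then have "u ! i \<le> u ! j"
    using d(3) contributing_prefix_mono[OF u, of i d] d(1) by (simp add: Des_head_def)
  then show "u ! j = u ! i"
    using contributing_prefix_mono[OF u, of j i] ji by simp
qed

lemma contributing_fresh_le_iff:
  assumes u: "u \<in> contributing_words" and i: "i < k" and j: "j < k"
    and uj: "u ! j \<notin> set (drop k u)"
  shows "u ! i \<le> u ! j \<longleftrightarrow>
    (count_below (set (drop k u)) (u ! i), card {d\<in>Des_head. d < i})
      \<le> (count_below (set (drop k u)) (u ! j), card {d\<in>Des_head. d < j})"
proof (cases "i \<le> j")
  case True
  have "card {d\<in>Des_head. d < i} \<le> card {d\<in>Des_head. d < j}"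
    using True finite_Des_head by (intro card_mono) auto
  then show ?thesis
    using contributing_prefix_mono[OF u True j] count_below_mono[of "set (drop k u)" "u ! i" "u ! j"]
    by simp
next
  case False
  let ?c = "count_below (set (drop k u))"
  have "j < i" using False by simp
  have "u ! j \<le> u ! i"
    using contributing_prefix_mono[OF u _ i] \<open>j < i\<close> by simp
  then have c_le: "?c (u ! j) \<le> ?c (u ! i)"
    by (simp add: count_below_mono)
  have card_le: "card {d\<in>Des_head. d < j} \<le> card {d\<in>Des_head. d < i}"
    using \<open>j < i\<close> finite_Des_head by (intro card_mono) auto
  have "u ! i \<le> u ! j \<longleftrightarrow> u ! j = u ! i"
    using \<open>u ! j \<le> u ! i\<close> by auto
  also have "\<dots> \<longleftrightarrow> card {d\<in>Des_head. d < j} = card {d\<in>Des_head. d < i}"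
    using contributing_fresh_eq_iff[OF u \<open>j < i\<close> i uj] card_Des_head_eq_iff[of j i] \<open>j < i\<close> by simp
  also have "\<dots> \<longleftrightarrow> (?c (u ! i), card {d\<in>Des_head. d < i}) \<le> (?c (u ! j), card {d\<in>Des_head. d < j})"
    using c_le card_le calculation \<open>u ! j \<le> u ! i\<close> by (auto dest: order.antisym)
  finally show ?thesis .
qed

lemma key_below_counts:
  assumes u: "u \<in> contributing_words" and i: "i < k + n"
  shows "key (below_counts u) i =
    (count_below (set (drop k u)) (u ! i), if u ! i \<in> set (drop k u) then k else card {d\<in>Des_head. d < i})"
proof (cases "k \<le> i")
  case True
  then have "u ! i \<in> set (drop k u)"
    using i contributing_length[OF u] by (auto simp: in_set_drop_iff)
  moreover have "count_below (set (drop k u)) (u ! i) = v ! (i - k) - 1"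
    using contributing_count_below_suffix[OF u, of "i - k"] True i by simp
  ultimately show ?thesis
    using True by (simp add: key_def)
next
  case False
  then show ?thesis
    using contributing_fresh_iff[OF u, of i] by (auto simp: key_def nth_below_counts[OF u])
qed

lemma contributing_same_order_keyword:
  assumes u: "u \<in> contributing_words"
  shows "same_order u (keyword (below_counts u))"
  unfolding same_order_def
proof (intro conjI allI impI)
  let ?Y = "set (drop k u)" and ?c = "count_below (set (drop k u))"
  let ?t = "\<lambda>i. if u ! i \<in> ?Y then k else card {d\<in>Des_head. d < i}"
  have L: "length u = k + n" using contributing_length[OF u] .
  then show "length u = length (keyword (below_counts u))"
    by (simp add: keyword_def)
  fix i j assume "i < length u" "j < length u"
  then have i: "i < k + n" and j: "j < k + n" using L by simp_all
  have key: "keyword (below_counts u) ! l = (?c (u ! l), ?t l)" if "l < k + n" for l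
    using key_below_counts[OF u that] that by (simp add: keyword_def)
  have suffix_in: "u ! l \<in> ?Y" if "k \<le> l" "l < k + n" for l
    using that L by (auto simp: in_set_drop_iff)
  have t_less: "?t l < k" if "u ! l \<notin> ?Y" "l < k + n" for l
    using that suffix_in card_Des_head_less[of l] by (cases "k \<le> l") auto
  have t_le: "?t l \<le> k" if "l < k + n" for l
    using t_less[OF _ that] by (cases "u ! l \<in> ?Y") auto
  have "u ! i \<le> u ! j \<longleftrightarrow> (?c (u ! i), ?t i) \<le> (?c (u ! j), ?t j)"
  proof (cases "u ! j \<in> ?Y")
    case True
    then have "(?c (u ! i), ?t i) \<le> (?c (u ! j), ?t j) \<longleftrightarrow> ?c (u ! i) \<le> ?c (u ! j)"
      using t_le[OF i] by auto
    with True show ?thesis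
      using count_below_le_iff[of ?Y "u ! j" "u ! i"] by simp
  next
    case uj: False
    show ?thesis
    proof (cases "u ! i \<in> ?Y")
      case True
      then have "(?c (u ! i), ?t i) \<le> (?c (u ! j), ?t j) \<longleftrightarrow> ?c (u ! i) < ?c (u ! j)"
        using t_less[OF uj j] by auto
      moreover have "u ! i \<le> u ! j \<longleftrightarrow> u ! i < u ! j"
        using True uj by (auto simp: le_less)
      ultimately show ?thesis
        using True uj count_below_less_iff[of ?Y "u ! i" "u ! j"] by simp
    next
      case ui: False
      then have "i < k" "j < k"
        using suffix_in i j uj by (meson not_le)+
      with ui uj show ?thesis
        using contributing_fresh_le_iff[OF u _ _ uj] by simp
    qed
  qed
  then show "u ! i \<le> u ! j \<longleftrightarrow> keyword (below_counts u) ! i \<le> keyword (below_counts u) ! j"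
    unfolding key[OF i] key[OF j] .
qed

lemma inj_on_below_counts: "inj_on below_counts contributing_words"
proof (rule inj_onI)
  fix u u' assume u: "u \<in> contributing_words" and u': "u' \<in> contributing_words" and eq: "below_counts u = below_counts u'"
  have "u = rank_word u"
    using u by (simp add: contributing_words_def rank_word_packed)
  also have "\<dots> = rank_word (keyword (below_counts u))"
    by (rule rank_word_eq_if_same_order[OF contributing_same_order_keyword[OF u]])
  also have "\<dots> = rank_word u'"
    unfolding eq by (rule rank_word_eq_if_same_order[OF contributing_same_order_keyword[OF u'], symmetric])
  also have "\<dots> = u'"
    using u' by (simp add: contributing_words_def rank_word_packed)
  finally show "u = u'" .
qed

lemma length_keyword [simp]: "length (keyword h) = k + n"
  by (simp add: keyword_def)

lemma nth_keyword: "i < k + n \<Longrightarrow> keyword h ! i = key h i"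
  by (simp add: keyword_def)

section \<open>Reconstructing a word from its counts\<close>

lemma key_prefix_mono:
  assumes h: "sorted h" "length h = k" and ij: "i \<le> j" "j < k"
  shows "key h i \<le> key h j"
proof -
  have "h ! i \<le> h ! j"
    using h ij by (simp add: sorted_iff_nth_mono)
  moreover have "snd (key h i) \<le> snd (key h j)" if "h ! i = h ! j"
  proof (cases "fresh h i")
    case True
    have "card {d\<in>Des_head. d < i} \<le> card {d\<in>Des_head. d < j}"
      using ij finite_Des_head by (intro card_mono) auto
    then show ?thesis
      using True ij card_Des_head_less[of i] by (simp add: key_def)
  next
    case False
    then have "\<not> fresh h j"
      using that ij unfolding fresh_def by auto
    with False show ?thesis
      using ij by (simp add: key_def)
  qed
  moreover have "fst (key h i) = h ! i" "fst (key h j) = h ! j"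
    using ij by (simp_all add: key_def)
  ultimately show ?thesis
    unfolding less_eq_prod_def by (auto simp: le_less)
qed

lemma sorted_lists_below_nth_le_m:
  assumes h: "h \<in> sorted_lists_below k count_bound" and i: "i < k"
  shows "h ! i \<le> m"
  using nth_less_sorted_lists_below[OF h i] by (simp add: count_bound_def split: if_splits)

lemma not_fresh_less_m:
  assumes h: "h \<in> sorted_lists_below k count_bound" and i: "i < k" and not_fresh: "\<not> fresh h i"
  shows "h ! i < m"
proof (rule ccontr)
  assume "\<not> h ! i < m"
  then have hi: "h ! i = m"
    using sorted_lists_below_nth_le_m[OF h i] by simp
  have hs: "sorted h" "length h = k"
    using h by (simp_all add: sorted_lists_below_def)
  have "h ! i < count_bound"
    by (rule nth_less_sorted_lists_below[OF h i])
  then have "k \<in> Des I"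
    using hi by (simp add: count_bound_def split: if_splits)
  then have "k - 1 \<in> Des_head"
    by (simp add: k_in_Des_iff)
  moreover have "h ! (k - 1) = m"
    using sorted_nth_mono[OF hs(1), of i "k - 1"] sorted_lists_below_nth_le_m[OF h, of "k - 1"] hs(2) i hi
    by simp
  ultimately have "fresh h i"
    using i hi unfolding fresh_def by (intro bexI[of _ "k - 1"]) auto
  with not_fresh show False by simp
qed

lemma drop_keyword: "drop k (keyword h) = map (\<lambda>a. (a - 1, k)) v"
  by (rule nth_equalityI) (simp_all add: length_v nth_keyword key_def)

lemma same_order_drop_keyword: "same_order (drop k (keyword h)) v"
proof -
  have "strict_mono_on (set v) (\<lambda>a. (a - 1, k))"
    using set_v by (auto simp: strict_mono_on_def)
  then show ?thesis
    unfolding drop_keyword by (rule same_order_map_strict_mono)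
qed

lemma key_Suc_eq_if_not_Des_head:
  assumes h: "h \<in> sorted_lists_below k count_bound" and i: "i < k"
    and "fresh h i" and "i \<notin> Des_head"
  shows "Suc i < k \<and> key h (Suc i) = key h i"
proof -
  have hs: "sorted h" "length h = k"
    using h by (simp_all add: sorted_lists_below_def)
  obtain d where d: "d \<in> Des_head" "i \<le> d" "h ! d = h ! i"
    using \<open>fresh h i\<close> unfolding fresh_def by blast
  then have "Suc i \<le> d" "d < k"
    using \<open>i \<notin> Des_head\<close> by (auto simp: Des_head_def Suc_le_eq le_less)
  then have "h ! Suc i = h ! i"
    using sorted_nth_mono[OF hs(1), of i "Suc i"] sorted_nth_mono[OF hs(1), of "Suc i" d] hs(2) d(3)
    by simp
  then have "fresh h (Suc i)"
    using d \<open>Suc i \<le> d\<close> unfolding fresh_def by auto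
  moreover have "{e\<in>Des_head. e < Suc i} = {e\<in>Des_head. e < i}"
    using \<open>i \<notin> Des_head\<close> by (auto simp: less_Suc_eq)
  ultimately show ?thesis
    using \<open>fresh h i\<close> \<open>h ! Suc i = h ! i\<close> \<open>Suc i \<le> d\<close> \<open>d < k\<close> by (simp add: key_def)
qed

lemma key_last_prefix_iff:
  assumes h: "h \<in> sorted_lists_below k count_bound" and i: "i < k"
  shows "(\<forall>j. i < j \<and> j < k + n \<longrightarrow> key h j \<noteq> key h i) \<longleftrightarrow> i \<in> Des_head"
proof (cases "fresh h i")
  case False
  then have "i \<notin> Des_head"
    unfolding fresh_def by blast
  have "Suc (h ! i) \<in> set v"
    using not_fresh_less_m[OF h i False] set_v by simp
  then obtain a where a: "a < n" "v ! a = Suc (h ! i)"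
    using length_v by (metis in_set_conv_nth)
  then have "key h (k + a) = key h i"
    using i False by (simp add: key_def)
  moreover have "i < k + a" "k + a < k + n"
    using a i by simp_all
  ultimately show ?thesis
    using \<open>i \<notin> Des_head\<close> by blast
next
  case True
  show ?thesis
  proof
    assume last: "\<forall>j. i < j \<and> j < k + n \<longrightarrow> key h j \<noteq> key h i"
    show "i \<in> Des_head"
    proof (rule ccontr)
      assume "i \<notin> Des_head"
      then have "Suc i < k" "key h (Suc i) = key h i"
        using key_Suc_eq_if_not_Des_head[OF h i True] by simp_all
      with last show False by simp
    qed
  next
    assume "i \<in> Des_head"
    have "snd (key h j) \<noteq> snd (key h i)" if j: "i < j" "j < k + n" for j
    proof -
      have "snd (key h i) = card {d\<in>Des_head. d < i}" "card {d\<in>Des_head. d < i} < k"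
        using True i card_Des_head_less[of i] by (simp_all add: key_def)
      moreover have "card {d\<in>Des_head. d < i} < card {d\<in>Des_head. d < j}" if "j < k"
        using \<open>i \<in> Des_head\<close> j finite_Des_head by (intro psubset_card_mono) auto
      ultimately show ?thesis
        by (auto simp: key_def)
    qed
    then show "\<forall>j. i < j \<and> j < k + n \<longrightarrow> key h j \<noteq> key h i" by metis
  qed
qed

lemma key_last_suffix_iff:
  assumes "k \<le> i" and "Suc i < k + n"
  shows "(\<forall>j. i < j \<and> j < k + n \<longrightarrow> key h j \<noteq> key h i) \<longleftrightarrow> Suc i \<in> Des I"
proof -
  have key_eq: "key h j = key h i \<longleftrightarrow> v ! (j - k) = v ! (i - k)" if "k \<le> j" "j < k + n" for j
  proof -
    have "1 \<le> v ! (j - k)" "1 \<le> v ! (i - k)"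
      using that assms nth_v_bounds[of "j - k"] nth_v_bounds[of "i - k"] by simp_all
    then show ?thesis
      using that assms by (auto simp: key_def)
  qed
  have step: "v ! (i - k) \<noteq> v ! (Suc i - k) \<longleftrightarrow> Suc i \<in> Des I"
    using v_step_iff[of "Suc i - k"] assms by (simp add: Suc_diff_le)
  show ?thesis
  proof
    assume "\<forall>j. i < j \<and> j < k + n \<longrightarrow> key h j \<noteq> key h i"
    then have "key h (Suc i) \<noteq> key h i"
      using assms(2) by blast
    then show "Suc i \<in> Des I"
      using key_eq[of "Suc i"] assms step by simp
  next
    assume "Suc i \<in> Des I"
    moreover have "Suc i - k = Suc (i - k)" "Suc (i - k) < n"
      using assms by simp_all
    ultimately have "v ! (i - k) < v ! (Suc i - k)"
      using step sorted_nth_mono[OF sorted_v, of "i - k" "Suc (i - k)"] length_v by simp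
    moreover have "v ! (Suc i - k) \<le> v ! (j - k)" if "i < j" "j < k + n" for j
      using sorted_nth_mono[OF sorted_v, of "Suc i - k" "j - k"] that assms length_v by simp
    ultimately show "\<forall>j. i < j \<and> j < k + n \<longrightarrow> key h j \<noteq> key h i"
      using key_eq assms by fastforce
  qed
qed

lemma wdes_rank_keyword:
  assumes h: "h \<in> sorted_lists_below k count_bound"
  shows "wdes (rank_word (keyword h)) = Des I"
proof (rule set_eqI)
  fix p
  let ?w = "rank_word (keyword h)"
  have eq: "?w ! j = ?w ! i \<longleftrightarrow> key h j = key h i" if "i < k + n" "j < k + n" for i j
    using same_order_nth_eq_iff[OF same_order_rank_word, of j "keyword h" i] that
    by (simp add: nth_keyword)
  show "p \<in> wdes ?w \<longleftrightarrow> p \<in> Des I"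
  proof (cases "1 \<le> p \<and> p < k + n")
    case True
    then have "p \<in> wdes ?w \<longleftrightarrow> (\<forall>j. p - 1 < j \<and> j < k + n \<longrightarrow> key h j \<noteq> key h (p - 1))"
      unfolding wdes_iff using eq by (auto simp: Suc_le_eq)
    also have "\<dots> \<longleftrightarrow> p \<in> Des I"
    proof (cases "p - 1 < k")
      case True
      then show ?thesis
        using key_last_prefix_iff[OF h True] \<open>1 \<le> p \<and> p < k + n\<close> by (simp add: Des_head_def)
    next
      case False
      then show ?thesis
        using key_last_suffix_iff[of "p - 1" h] \<open>1 \<le> p \<and> p < k + n\<close> by simp
    qed
    finally show ?thesis .
  next
    case False
    then show ?thesis
      using Des_I_bounds[of p] by (auto simp: wdes_iff)
  qed
qed

lemma count_below_keyword:
  assumes h: "h \<in> sorted_lists_below k count_bound" and i: "i < k"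
  shows "count_below (set (drop k (keyword h))) (keyword h ! i) = h ! i"
proof -
  let ?f = "\<lambda>a. (a - 1, k)"
  have "snd (key h i) \<le> k"
    using i card_Des_head_less[of i] by (simp add: key_def)
  then have below: "?f a < keyword h ! i \<longleftrightarrow> a - 1 < h ! i" for a
    using i by (cases "key h i") (auto simp: nth_keyword key_def split: if_splits)
  have "{b\<in>set (drop k (keyword h)). b < keyword h ! i} = ?f ` {a\<in>{1..m}. ?f a < keyword h ! i}"
    by (auto simp: drop_keyword set_v)
  also have "{a\<in>{1..m}. ?f a < keyword h ! i} = {1..h ! i}"
  proof (rule set_eqI)
    fix a show "a \<in> {a\<in>{1..m}. ?f a < keyword h ! i} \<longleftrightarrow> a \<in> {1..h ! i}"
      using below[of a] sorted_lists_below_nth_le_m[OF h i] by auto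
  qed
  finally have "{b\<in>set (drop k (keyword h)). b < keyword h ! i} = ?f ` {1..h ! i}" .
  moreover have "inj_on ?f {1..h ! i}"
    by (rule inj_onI) auto
  ultimately show ?thesis
    by (simp add: count_below_def card_image)
qed

lemma rank_keyword_mem_contributing:
  assumes h: "h \<in> sorted_lists_below k count_bound"
  shows "rank_word (keyword h) \<in> contributing_words"
proof -
  let ?u = "rank_word (keyword h)"
  have same: "same_order ?u (keyword h)"
    by (rule same_order_rank_word)
  have "sorted (take k (keyword h))"
    using h key_prefix_mono by (auto simp: sorted_iff_nth_mono nth_keyword sorted_lists_below_def)
  then have "sorted (take k ?u)"
    using same_order_sorted[OF same_order_take[OF same, of k]] by simp
  moreover have "rank_word (drop k ?u) = v"
    using rank_word_eq_if_same_order[OF same_order_drop[OF same, of k]]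
      rank_word_eq_if_same_order[OF same_order_drop_keyword] rank_word_packed[OF packed_v]
    by simp
  ultimately show ?thesis
    using wdes_rank_keyword[OF h] packed_rank_word
    by (simp add: contributing_words_def pack_eq_rank_word)
qed

lemma below_counts_rank_keyword:
  assumes h: "h \<in> sorted_lists_below k count_bound"
  shows "below_counts (rank_word (keyword h)) = h"
proof (rule nth_equalityI)
  have u: "rank_word (keyword h) \<in> contributing_words"
    by (rule rank_keyword_mem_contributing[OF h])
  show "length (below_counts (rank_word (keyword h))) = length h"
    using h by (simp add: length_below_counts[OF u] sorted_lists_below_def)
  fix i assume "i < length (below_counts (rank_word (keyword h)))"
  then have i: "i < k"
    by (simp add: length_below_counts[OF u])
  have "below_counts (rank_word (keyword h)) ! i =
      count_below (set (drop k (keyword h))) (keyword h ! i)"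
    using count_below_drop_same_order[OF same_order_rank_word, of i "keyword h" k] i
    by (simp add: nth_below_counts[OF u])
  then show "below_counts (rank_word (keyword h)) ! i = h ! i"
    using count_below_keyword[OF h i] by simp
qed

lemma bij_betw_below_counts: "bij_betw below_counts contributing_words (sorted_lists_below k count_bound)"
proof (rule bij_betw_imageI)
  show "below_counts ` contributing_words = sorted_lists_below k count_bound"
  proof (intro equalityI subsetI)
    fix h assume "h \<in> sorted_lists_below k count_bound"
    then show "h \<in> below_counts ` contributing_words"
      using rank_keyword_mem_contributing below_counts_rank_keyword by (metis image_eqI)
  qed (auto simp: below_counts_mem)
qed (rule inj_on_below_counts)

lemma sinv_contributing:
  assumes u: "u \<in> contributing_words"
  shows "sinv u = sum_list (below_counts u)"
proof -
  define B where "B i = {j. k \<le> j \<and> j < length u \<and> u ! j < u ! i \<and> u ! j \<notin> set (drop (Suc j) u)}" for i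
  have L: "length u = k + n" using contributing_length[OF u] .
  have "{(i, j). i < j \<and> j < length u \<and> u ! i > u ! j \<and> u ! j \<notin> set (drop (Suc j) u)} = Sigma {..<k} B"
  proof (intro equalityI subsetI)
    fix x assume "x \<in> {(i, j). i < j \<and> j < length u \<and> u ! i > u ! j \<and> u ! j \<notin> set (drop (Suc j) u)}"
    then obtain i j where x: "x = (i, j)"
      and ij: "i < j" "j < length u" "u ! j < u ! i" "u ! j \<notin> set (drop (Suc j) u)"
      by blast
    have "k \<le> j"
      using contributing_prefix_mono[OF u, of i j] ij by (cases "k \<le> j") auto
    moreover have "i < k"
      using contributing_suffix_mono[OF u, of i j] ij L by (cases "i < k") auto
    ultimately show "x \<in> Sigma {..<k} B"
      using ij x by (simp add: B_def)
  qed (auto simp: B_def)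
  then have "sinv u = card (Sigma {..<k} B)"
    by (simp add: sinv_def)
  also have "\<dots> = (\<Sum>i<k. card (B i))"
    by (rule card_SigmaI) (auto simp: B_def)
  also have "\<dots> = (\<Sum>i<k. below_counts u ! i)"
  proof (rule sum.cong)
    fix i assume "i \<in> {..<k}"
    then show "card (B i) = below_counts u ! i"
      using card_last_occurrences[of k u "\<lambda>b. b < u ! i"]
      by (simp add: B_def nth_below_counts[OF u] count_below_def)
  qed simp
  also have "\<dots> = sum_list (below_counts u)"
    by (simp add: sum_list_sum_nth length_below_counts[OF u] atLeast0LessThan)
  finally show ?thesis .
qed

lemma psi_coeff_eq_sum_contributing:
  "psi_coeff I (qstar (S_tilde k) (M v)) = (\<Sum>u\<in>contributing_words. qX ^ sinv u :: 'a::field_char_0 poly fract)"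
proof -
  let ?T = "{u. packed u \<and> length u = sum_list I \<and> WC u = I}"
  have WC_iff: "WC u = I \<longleftrightarrow> wdes u = Des I" if "length u = k + n" for u
    using WC_eq_iff[OF is_comp_I, of u] that sum_list_I k_pos by simp
  have T: "?T = {u. packed u \<and> length u = k + n \<and> wdes u = Des I}"
    using WC_iff sum_list_I by auto
  have "psi_coeff I (qstar (S_tilde k) (M v)) = (\<Sum>u\<in>?T. qstar (S_tilde k) (M v) u)"
    by (simp add: psi_coeff_def)
  also have "\<dots> = (\<Sum>u\<in>?T. if u \<in> contributing_words then qX ^ sinv u else (0::'a poly fract))"
  proof (rule sum.cong)
    fix u assume "u \<in> ?T"
    then have "packed u" "length u = k + n" "wdes u = Des I"
      unfolding T by simp_all
    then have "qstar (S_tilde k) (M v) u =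
        (if sorted (take k u) \<and> pack (drop k u) = v then qX ^ sinv u else 0)"
      using sorted_v by (intro qstar_S_tilde_M_apply) simp_all
    with \<open>packed u\<close> \<open>length u = k + n\<close> \<open>wdes u = Des I\<close>
    show "qstar (S_tilde k) (M v) u = (if u \<in> contributing_words then qX ^ sinv u else 0)"
      by (simp add: contributing_words_def)
  qed simp
  also have "\<dots> = (\<Sum>u\<in>contributing_words. qX ^ sinv u)"
  proof -
    have "finite ?T"
      by (rule finite_subset[OF _ finite_packed_words[of "sum_list I"]]) auto
    moreover have "contributing_words \<subseteq> ?T"
      unfolding T contributing_words_def by blast
    ultimately show ?thesis
      by (simp add: sum.inter_restrict[symmetric] Int_absorb1)
  qed
  finally show ?thesis .
qed

lemma sum_contributing:
  "(\<Sum>u\<in>contributing_words. qX ^ sinv u) = (qbinom (k + (count_bound - 1)) (count_bound - 1) :: 'a::field_char_0 poly fract)"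
proof -
  have "(\<Sum>u\<in>contributing_words. (qX::'a poly fract) ^ sinv u) = (\<Sum>u\<in>contributing_words. qX ^ sum_list (below_counts u))"
    by (simp add: sinv_contributing)
  also have "\<dots> = (\<Sum>h\<in>sorted_lists_below k count_bound. qX ^ sum_list h)"
    by (rule sum.reindex_bij_betw[OF bij_betw_below_counts])
  also have "\<dots> = qbinom (k + (count_bound - 1)) (count_bound - 1)"
    using sum_sorted_lists_below[of k "count_bound - 1"] m_eq_card_Des_tail by (simp add: count_bound_def)
  finally show ?thesis .
qed

lemma card_Des_from_k: "card {p\<in>Des I. k \<le> p} = count_bound - 1"
proof -
  have "{p\<in>Des I. k \<le> p} = (\<lambda>a. k + a) ` {a. k + a \<in> Des I}"
  proof (intro equalityI subsetI)
    fix p assume "p \<in> {p\<in>Des I. k \<le> p}"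
    then show "p \<in> (\<lambda>a. k + a) ` {a. k + a \<in> Des I}"
      by (intro image_eqI[of _ _ "p - k"]) auto
  qed auto
  moreover have "{a. k + a \<in> Des I} = (if k \<in> Des I then insert 0 Des_tail else Des_tail)"
    by (auto simp: Des_tail_def Suc_le_eq) (metis add.right_neutral gr0I)
  moreover have "0 \<notin> Des_tail"
    by (simp add: Des_tail_def)
  ultimately show ?thesis
    using finite_Des_tail by (simp add: card_image count_bound_def m_eq_card_Des_tail)
qed

lemma length_head_comp:
  "length (comp_of k (Des I \<inter> {1..k - 1})) = card {p\<in>Des I. p < k} + 1"
proof -
  have "{p\<in>Des I \<inter> {1..k - 1}. 0 < p \<and> p < k} = {p\<in>Des I. p < k}"
    using Des_I_bounds by fastforce
  then show ?thesis
    using length_comp_of[OF k_pos, of "Des I \<inter> {1..k - 1}"] by simp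
qed

lemma length_I_eq: "length I = card {p\<in>Des I. p < k} + (count_bound - 1) + 1"
proof -
  have "I \<noteq> []"
    using sum_list_I k_pos by auto
  then have "length I = card (Des I) + 1"
    using card_Des[OF is_comp_I] by simp
  moreover have "card (Des I) = card {p\<in>Des I. p < k} + card {p\<in>Des I. k \<le> p}"
    using card_Int_Diff[of "Des I" "{..<k}"] by (simp add: Int_def set_diff_eq not_less)
  ultimately show ?thesis
    using card_Des_from_k by simp
qed

end

theorem mainTheorem17:
  fixes k n :: nat and I :: "nat list"
  assumes "1 \<le> k" and "1 \<le> n"
    and "is_comp I" and "sum_list I = k + n"
  shows "let I' = comp_of n {a. 1 \<le> a \<and> k + a \<in> Des I};
             v = nondec_word I';
             r = length I;
             K = comp_of k (Des I \<inter> {1..k - 1});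
             s = length K
         in psi_coeff I (qstar (S_tilde k) (M v)) =
            (qbinom (k + r - s) (r - s) :: 'a::field_char_0 poly fract)"
proof -
  interpret split_composition k n I
    using assms by unfold_locales
  have "nondec_word (comp_of n {a. 1 \<le> a \<and> k + a \<in> Des I}) = v"
    by (simp add: v_def tail_comp_def Des_tail_def)
  moreover have "length I - length (comp_of k (Des I \<inter> {1..k - 1})) = count_bound - 1"
    and "k + length I - length (comp_of k (Des I \<inter> {1..k - 1})) = k + (count_bound - 1)"
    using length_I_eq length_head_comp by simp_all
  ultimately show ?thesis
    using psi_coeff_eq_sum_contributing[where 'a='a] sum_contributing[where 'a='a] by (simp add: Let_def)
qed

end
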